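(* Let $r$ and $d$ be positive integers, $\operatorname{Tv}(d,r)=(d+1)(r-1)+1$, and let $S\subset\mathbb{R}^d$ be a set of $n>\operatorname{Tv}(d,r)$ points. Then the clique number of the Tverberg $r$-partition graph satisfies $\omega(G_T[S,r])=r$.
   Context: A partition of a finite set $S$ into $r$ parts is a collection of $r$ nonempty pairwise disjoint subsets $P_1,\dots,P_r$ (unordered) whose union is $S$. For a finite $S\subset\mathbb{R}^d$, a Tverberg partition of $S$ into $r$ parts is such a partition with $\bigcap_{j=1}^r\operatorname{conv}(P_j)\neq\emptyset$. For two partitions $P,P'$ of $S$, the partition distance $D(P,P')$ is the minimum number of elements of $S$ that must be removed so that $P$ and $P'$ restricted to the remaining elements coincide. The Tverberg $r$-partition graph $G_T[S,r]$ has as vertices all Tverberg partitions of $S$ into $r$ parts, with an edge between $P$ and $P'$ if and only if $D(P,P')=1$. The clique number $\omega(G)$ is the number of vertices of a largest complete subgraph of $G$. *)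

theory Defs
  imports "HOL-Analysis.Analysis" "HOL-Library.Disjoint_Sets"
begin

definition Tv :: "nat \<Rightarrow> nat \<Rightarrow> nat" where
  "Tv d r = (d + 1) * (r - 1) + 1"

definition partition_into :: "'a set \<Rightarrow> nat \<Rightarrow> 'a set set \<Rightarrow> bool" where
  "partition_into S r P \<longleftrightarrow> partition_on S P \<and> card P = r"

definition tverberg_partition :: "('a::real_vector) set \<Rightarrow> nat \<Rightarrow> 'a set set \<Rightarrow> bool" where
  "tverberg_partition S r P \<longleftrightarrow> partition_into S r P \<and> (\<Inter>B\<in>P. convex hull B) \<noteq> {}"

definition restrict_partition :: "'a set set \<Rightarrow> 'a set \<Rightarrow> 'a set set" where
  "restrict_partition P T = (\<lambda>B. B \<inter> T) ` P - {{}}"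

definition partition_distance :: "'a set \<Rightarrow> 'a set set \<Rightarrow> 'a set set \<Rightarrow> nat" where
  "partition_distance S P P' =
     Min {card X | X. X \<subseteq> S \<and> restrict_partition P (S - X) = restrict_partition P' (S - X)}"

definition tverberg_vertices :: "('a::real_vector) set \<Rightarrow> nat \<Rightarrow> 'a set set set" where
  "tverberg_vertices S r = {P. tverberg_partition S r P}"

definition tverberg_adj :: "'a set \<Rightarrow> 'a set set \<Rightarrow> 'a set set \<Rightarrow> bool" where
  "tverberg_adj S P P' \<longleftrightarrow> partition_distance S P P' = 1"

definition clique_number :: "'v set \<Rightarrow> ('v \<Rightarrow> 'v \<Rightarrow> bool) \<Rightarrow> nat" where
  "clique_number V adj =
     Max {card C | C. C \<subseteq> V \<and> (\<forall>x\<in>C. \<forall>y\<in>C. x \<noteq> y \<longrightarrow> adj x y)}"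

end

(*
  Lower bound: remove a point x from S. The remaining n - 1 >= Tv(d, r) points have a
  Tverberg partition into r parts (Tverberg's theorem, which follows from the colourful
  Caratheodory theorem by Sarkaria's tensor lifting; the colourful Caratheodory theorem in
  turn follows by choosing a colourful simplex and a point of it of least norm). Adding x to
  each of the r blocks in turn gives r Tverberg partitions of S that pairwise differ only in
  the position of x, i.e. a clique of size r.

  Upper bound: adjacent partitions agree off a single point. If all members of a clique
  agree with one of them, P, off a common point x, then each member is determined by the
  block of P restricted to S - {x} that x joins, so there are at most r of them. Otherwise
  three members P, Q, R form a triangle moving distinct points x, y, z. Then {x, y} and {z}
  are blocks of P and every further member of the clique equals Q or R, so the clique has at
  most 3 members; for r <= 2 this would force P = {{x, y}, {z}} and n = 3, which
  n > Tv(d, 2) = d + 2 excludes.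
*)

theory Submission
  imports Defs
begin

section \<open>The colourful Caratheodory theorem\<close>

text \<open>Vectors of \<open>\<real>\<^sup>K\<close> are functions on a finite coordinate set \<open>K\<close>, and the points of the
  convex hull of vectors \<open>v i\<close>, \<open>i \<in> I\<close>, are their combinations with weights in
  \<open>simplex_weights I\<close>.\<close>

definition simplex_weights :: "'i set \<Rightarrow> ('i \<Rightarrow> real) set" where
  "simplex_weights I = {w. (\<forall>i\<in>I. 0 \<le> w i) \<and> (\<forall>i. i \<notin> I \<longrightarrow> w i = 0) \<and> sum w I = 1}"

lemma simplex_weightsD:
  assumes "w \<in> simplex_weights I"
  shows "\<And>i. i \<in> I \<Longrightarrow> 0 \<le> w i" and "\<And>i. i \<notin> I \<Longrightarrow> w i = 0" and "sum w I = 1"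
  using assms by (auto simp: simplex_weights_def)

lemma vertex_in_simplex_weights:
  assumes "finite I" "i \<in> I"
  shows "(\<lambda>j. if j = i then 1 else 0) \<in> simplex_weights I"
  using assms by (auto simp: simplex_weights_def)

lemma compact_simplex_weights:
  fixes I :: "'i set"
  assumes "finite I"
  shows "compact (simplex_weights I)"
proof -
  define B where "B = PiE UNIV (\<lambda>i. if i \<in> I then {0..1::real} else {0})"
  have "compactin (product_topology (\<lambda>i. euclidean) UNIV) B"
    unfolding B_def by (subst compactin_PiE) auto
  then have "compact B"
    by (simp add: euclidean_product_topology)
  moreover have "closed {w::'i\<Rightarrow>real. sum w I = 1}"
    by (intro closed_Collect_eq continuous_on_sum continuous_on_product_coordinates
        continuous_on_const)
  moreover have "simplex_weights I = B \<inter> {w. sum w I = 1}"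
  proof (intro set_eqI iffI)
    fix w assume w: "w \<in> simplex_weights I"
    have "w i \<le> 1" if "i \<in> I" for i
      using member_le_sum[of i I w] simplex_weightsD[OF w] that assms by auto
    then show "w \<in> B \<inter> {w. sum w I = 1}"
      using simplex_weightsD[OF w] by (auto simp: B_def)
  qed (auto simp: B_def simplex_weights_def PiE_iff split: if_splits)
  ultimately show ?thesis
    by (simp add: compact_Int_closed)
qed

lemma exists_linear_dependence:
  fixes v :: "'i \<Rightarrow> 'k \<Rightarrow> real"
  assumes "finite K" "finite I" "card K < card I"
  shows "\<exists>\<mu>. (\<exists>i\<in>I. \<mu> i \<noteq> 0) \<and> (\<forall>k\<in>K. (\<Sum>i\<in>I. \<mu> i * v i k) = 0)"
  using assms
proof (induction K arbitrary: I v rule: finite_induct)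
  case empty
  then obtain i where "i \<in> I"
    by fastforce
  then show ?case
    by (intro exI[of _ "\<lambda>_. 1"]) auto
next
  case (insert k K)
  show ?case
  proof (cases "\<forall>i\<in>I. v i k = 0")
    case True
    then show ?thesis
      using insert.IH[of I v] insert.prems insert.hyps by auto
  next
    case False
    then obtain i0 where i0: "i0 \<in> I" "v i0 k \<noteq> 0"
      by auto
    define I' where "I' = I - {i0}"
    \<comment> \<open>Gaussian elimination: clear coordinate \<open>k\<close> using the vector \<open>v i0\<close>.\<close>
    define v' where "v' = (\<lambda>i k'. v i k' - (v i k / v i0 k) * v i0 k')"
    have I: "I = insert i0 I'" "i0 \<notin> I'" "finite I'"
      using i0 insert.prems by (auto simp: I'_def)
    have "card K < card I'"
      using insert.prems insert.hyps i0 by (simp add: I'_def)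
    then obtain \<mu>' where \<mu>': "\<exists>i\<in>I'. \<mu>' i \<noteq> 0" "\<forall>k\<in>K. (\<Sum>i\<in>I'. \<mu>' i * v' i k) = 0"
      using insert.IH[OF I(3)] by blast
    define c where "c = (\<Sum>i\<in>I'. \<mu>' i * v i k)"
    define \<mu> where "\<mu> = \<mu>'(i0 := - c / v i0 k)"
    have sum_\<mu>: "(\<Sum>i\<in>I. \<mu> i * v i k') = - c / v i0 k * v i0 k' + (\<Sum>i\<in>I'. \<mu>' i * v i k')" for k'
    proof -
      have "(\<Sum>i\<in>I'. \<mu> i * v i k') = (\<Sum>i\<in>I'. \<mu>' i * v i k')"
        by (intro sum.cong) (auto simp: \<mu>_def I)
      then show ?thesis
        by (simp add: I \<mu>_def)
    qed
    have "(\<Sum>i\<in>I. \<mu> i * v i k') = 0" if "k' \<in> insert k K" for k'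
    proof (cases "k' = k")
      case True
      then show ?thesis
        using sum_\<mu>[of k] i0 by (simp add: c_def)
    next
      case False
      have "(\<Sum>i\<in>I'. \<mu>' i * v' i k') = (\<Sum>i\<in>I'. \<mu>' i * v i k') - c / v i0 k * v i0 k'"
        by (simp add: v'_def c_def right_diff_distrib sum_subtractf sum_distrib_left
            sum_distrib_right sum_divide_distrib algebra_simps)
      then show ?thesis
        using \<mu>'(2) False that sum_\<mu>[of k'] by simp
    qed
    moreover have "\<exists>i\<in>I. \<mu> i \<noteq> 0"
      using \<mu>'(1) I by (auto simp: \<mu>_def)
    ultimately show ?thesis
      by blast
  qed
qed

lemma simplex_min_norm_inner_ge:
  fixes h :: "'i \<Rightarrow> 'k \<Rightarrow> real"
  assumes "finite I" "i0 \<in> I" and w: "w \<in> simplex_weights I"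
    and min: "\<And>w'. w' \<in> simplex_weights I \<Longrightarrow>
      (\<Sum>k\<in>K. (\<Sum>i\<in>I. w i * h i k)\<^sup>2) \<le> (\<Sum>k\<in>K. (\<Sum>i\<in>I. w' i * h i k)\<^sup>2)"
  shows "(\<Sum>k\<in>K. (\<Sum>i\<in>I. w i * h i k)\<^sup>2) \<le> (\<Sum>k\<in>K. (\<Sum>i\<in>I. w i * h i k) * h i0 k)"
proof (rule ccontr)
  define x where "x = (\<lambda>k. \<Sum>i\<in>I. w i * h i k)"
  define d where "d = (\<lambda>k. h i0 k - x k)"
  define a where "a = - (\<Sum>k\<in>K. x k * d k)"
  define q where "q = (\<Sum>k\<in>K. (d k)\<^sup>2)"
  assume "\<not> ?thesis"
  then have "a > 0"
    by (simp add: a_def d_def x_def right_diff_distrib sum_subtractf power2_eq_square)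
  have "q \<ge> 0"
    by (simp add: q_def sum_nonneg)
  \<comment> \<open>Moving the weights a step \<open>t\<close> towards the vertex \<open>i0\<close> changes the squared norm
    by \<open>t * (t * q - 2 * a)\<close>, which is negative for small \<open>t > 0\<close>.\<close>
  define t where "t = min 1 (a / (q + 1))"
  have "0 < t" "t \<le> 1"
    using \<open>a > 0\<close> \<open>q \<ge> 0\<close> by (auto simp: t_def)
  moreover have "t * q + t \<le> a"
    using \<open>q \<ge> 0\<close> pos_le_divide_eq[of "q + 1" t a] by (simp add: t_def algebra_simps)
  ultimately have t: "0 < t" "t \<le> 1" "t * q < 2 * a"
    using \<open>a > 0\<close> by auto
  define w' where "w' = (\<lambda>i. (1 - t) * w i + (if i = i0 then t else 0))"
  have "sum w' I = (1 - t) * sum w I + t"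
    using assms(1,2) by (simp add: w'_def sum.distrib sum_distrib_left)
  then have "w' \<in> simplex_weights I"
    using simplex_weightsD[OF w] t assms(2) by (auto simp: simplex_weights_def w'_def)
  moreover have "(\<Sum>i\<in>I. w' i * h i k) = x k + t * d k" for k
  proof -
    have "(\<Sum>i\<in>I. w' i * h i k) =
        (\<Sum>i\<in>I. (1 - t) * (w i * h i k)) + (\<Sum>i\<in>I. if i = i0 then t * h i k else 0)"
      unfolding w'_def sum.distrib[symmetric] by (intro sum.cong) (auto simp: algebra_simps)
    also have "\<dots> = (1 - t) * x k + t * h i0 k"
      using assms(1,2) by (simp add: x_def sum_distrib_left)
    finally show ?thesis
      by (simp add: d_def algebra_simps)
  qed
  ultimately have "(\<Sum>k\<in>K. (x k)\<^sup>2) \<le> (\<Sum>k\<in>K. (x k + t * d k)\<^sup>2)"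
    using min unfolding x_def by fastforce
  also have "\<dots> = (\<Sum>k\<in>K. (x k)\<^sup>2) - t * (2 * a - t * q)"
    by (simp add: a_def q_def power2_sum sum.distrib sum_distrib_left power_mult_distrib
        power2_eq_square algebra_simps)
  finally show False
    using t mult_pos_pos[of t "2 * a - t * q"] by linarith
qed

lemma simplex_weights_drop_vertex:
  assumes "finite I" and w: "w \<in> simplex_weights I" and "sum \<mu> I = 0" "\<exists>i\<in>I. \<mu> i \<noteq> 0"
  shows "\<exists>w'\<in>simplex_weights I. \<exists>i0\<in>I. w' i0 = 0 \<and> (\<exists>t. \<forall>i\<in>I. w' i = w i - t * \<mu> i)"
proof -
  define P where "P = {i\<in>I. \<mu> i > 0}"
  have "P \<noteq> {}"
  proof
    assume "P = {}"
    then have "\<forall>i\<in>I. - \<mu> i \<ge> 0"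
      by (auto simp: P_def)
    moreover have "(\<Sum>i\<in>I. - \<mu> i) = 0"
      using \<open>sum \<mu> I = 0\<close> by (simp add: sum_negf)
    ultimately have "\<forall>i\<in>I. \<mu> i = 0"
      using \<open>finite I\<close> sum_nonneg_eq_0_iff[of I "\<lambda>i. - \<mu> i"] by auto
    then show False
      using assms(4) by blast
  qed
  have "finite P"
    using \<open>finite I\<close> by (simp add: P_def)
  define t where "t = Min ((\<lambda>i. w i / \<mu> i) ` P)"
  have "t \<in> (\<lambda>i. w i / \<mu> i) ` P"
    unfolding t_def using \<open>finite P\<close> \<open>P \<noteq> {}\<close> by (intro Min_in) auto
  then obtain i0 where i0: "i0 \<in> P" "t = w i0 / \<mu> i0"
    by blast
  have t_le: "t * \<mu> i \<le> w i" if "i \<in> I" for i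
  proof (cases "\<mu> i > 0")
    case True
    then have "t \<le> w i / \<mu> i"
      using \<open>finite P\<close> that by (simp add: t_def P_def)
    then show ?thesis
      using True by (simp add: pos_le_divide_eq)
  next
    case False
    moreover have "t \<ge> 0"
      using i0 simplex_weightsD(1)[OF w] by (simp add: P_def)
    ultimately show ?thesis
      using simplex_weightsD(1)[OF w that] by (meson mult_nonneg_nonpos not_less order_trans)
  qed
  define w' where "w' = (\<lambda>i. if i \<in> I then w i - t * \<mu> i else 0)"
  have "sum w' I = sum w I - t * sum \<mu> I"
    by (simp add: w'_def sum_subtractf sum_distrib_left)
  then have "w' \<in> simplex_weights I"
    using t_le simplex_weightsD[OF w] \<open>sum \<mu> I = 0\<close> by (auto simp: simplex_weights_def w'_def)
  moreover have "i0 \<in> I" "w' i0 = 0"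
    using i0 by (auto simp: w'_def P_def)
  moreover have "\<forall>i\<in>I. w' i = w i - t * \<mu> i"
    by (simp add: w'_def)
  ultimately show ?thesis
    by blast
qed

lemma min_norm_point_in_facet:
  fixes v :: "'i \<Rightarrow> 'k \<Rightarrow> real"
  assumes "finite I" "finite K" "card K < card I" and w: "w \<in> simplex_weights I"
    and x: "\<forall>k\<in>K. (\<Sum>i\<in>I. w i * v i k) = x k"
    and pos: "(\<Sum>k\<in>K. (x k)\<^sup>2) > 0"
    and inner_ge: "\<forall>i\<in>I. (\<Sum>k\<in>K. (x k)\<^sup>2) \<le> (\<Sum>k\<in>K. x k * v i k)"
  shows "\<exists>w'\<in>simplex_weights I. \<exists>i0\<in>I. w' i0 = 0 \<and> (\<forall>k\<in>K. (\<Sum>i\<in>I. w' i * v i k) = x k)"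
proof (cases "\<exists>i0\<in>I. w i0 = 0")
  case True
  then show ?thesis
    using w x by blast
next
  case False
  define m where "m = (\<Sum>k\<in>K. (x k)\<^sup>2)"
  define ip where "ip = (\<lambda>i. \<Sum>k\<in>K. x k * v i k)"
  have swap: "(\<Sum>i\<in>I. c i * ip i) = (\<Sum>k\<in>K. x k * (\<Sum>i\<in>I. c i * v i k))" for c
    by (simp add: ip_def sum_distrib_left sum_distrib_right sum.swap[of _ I K] algebra_simps)
  \<comment> \<open>All weights are positive, so the inequalities \<open>inner_ge\<close> are all equalities \<dots>\<close>
  have "(\<Sum>i\<in>I. w i * (ip i - m)) = 0"
    using swap[of w] x simplex_weightsD(3)[OF w]
    by (simp add: m_def right_diff_distrib sum_subtractf power2_eq_square flip: sum_distrib_right)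
  moreover have "\<forall>i\<in>I. w i * (ip i - m) \<ge> 0"
    using inner_ge simplex_weightsD(1)[OF w] by (simp add: ip_def m_def)
  ultimately have "\<forall>i\<in>I. w i * (ip i - m) = 0"
    using \<open>finite I\<close> by (simp add: sum_nonneg_eq_0_iff)
  then have ip_eq: "\<forall>i\<in>I. ip i = m"
    using False by auto
  obtain \<mu> where \<mu>: "\<exists>i\<in>I. \<mu> i \<noteq> 0" "\<forall>k\<in>K. (\<Sum>i\<in>I. \<mu> i * v i k) = 0"
    using exists_linear_dependence[OF assms(2,1,3)] by blast
  \<comment> \<open>\<dots> which turns the linear dependence \<open>\<mu>\<close> into an affine one.\<close>
  have "m * sum \<mu> I = 0"
    using swap[of \<mu>] \<mu>(2) ip_eq by (simp add: sum_distrib_left mult.commute)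
  then have "sum \<mu> I = 0"
    using pos by (simp add: m_def)
  then obtain w' i0 t where w': "w' \<in> simplex_weights I" "i0 \<in> I" "w' i0 = 0"
    and w'_eq: "\<forall>i\<in>I. w' i = w i - t * \<mu> i"
    using simplex_weights_drop_vertex[OF \<open>finite I\<close> w _ \<mu>(1)] by blast
  have "(\<Sum>i\<in>I. w' i * v i k) = (\<Sum>i\<in>I. (w i - t * \<mu> i) * v i k)" for k
    using w'_eq by (intro sum.cong) auto
  then have "(\<Sum>i\<in>I. w' i * v i k) = (\<Sum>i\<in>I. w i * v i k) - t * (\<Sum>i\<in>I. \<mu> i * v i k)" for k
    by (simp add: left_diff_distrib sum_subtractf sum_distrib_left mult.assoc)
  then show ?thesis
    using w' x \<mu>(2) by auto
qed

lemma exists_min_norm_colourful_combination: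
  fixes g :: "'i \<Rightarrow> 'j \<Rightarrow> 'k \<Rightarrow> real"
  assumes "finite I" "finite J" "I \<noteq> {}" "J \<noteq> {}"
  obtains ch0 w0 where "ch0 \<in> I \<rightarrow>\<^sub>E J" "w0 \<in> simplex_weights I"
    "\<And>ch w. ch \<in> I \<rightarrow>\<^sub>E J \<Longrightarrow> w \<in> simplex_weights I \<Longrightarrow>
      (\<Sum>k\<in>K. (\<Sum>i\<in>I. w0 i * g i (ch0 i) k)\<^sup>2) \<le> (\<Sum>k\<in>K. (\<Sum>i\<in>I. w i * g i (ch i) k)\<^sup>2)"
proof -
  define F where "F ch w = (\<Sum>k\<in>K. (\<Sum>i\<in>I. w i * g i (ch i) k)\<^sup>2)" for ch w
  have "simplex_weights I \<noteq> {}"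
    using vertex_in_simplex_weights[OF \<open>finite I\<close>] \<open>I \<noteq> {}\<close> by blast
  have "continuous_on (simplex_weights I) (F ch)" for ch
    unfolding F_def
    by (auto intro!: continuous_intros continuous_on_subset[OF continuous_on_product_coordinates])
  then have "\<exists>w\<in>simplex_weights I. \<forall>w'\<in>simplex_weights I. F ch w \<le> F ch w'" for ch
    using continuous_attains_inf[OF compact_simplex_weights[OF \<open>finite I\<close>]
        \<open>simplex_weights I \<noteq> {}\<close>] by blast
  then obtain wmin where wmin: "\<And>ch. wmin ch \<in> simplex_weights I"
    "\<And>ch w. w \<in> simplex_weights I \<Longrightarrow> F ch (wmin ch) \<le> F ch w"
    by metis
  have "finite (I \<rightarrow>\<^sub>E J)" "I \<rightarrow>\<^sub>E J \<noteq> {}"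
    using assms by (simp_all add: finite_PiE PiE_eq_empty_iff)
  then obtain ch0 where "ch0 \<in> I \<rightarrow>\<^sub>E J" "\<And>ch. ch \<in> I \<rightarrow>\<^sub>E J \<Longrightarrow> F ch0 (wmin ch0) \<le> F ch (wmin ch)"
    using arg_min_if_finite[of "I \<rightarrow>\<^sub>E J" "\<lambda>ch. F ch (wmin ch)"] by (metis not_le)
  then show ?thesis
    using that[of ch0 "wmin ch0"] wmin unfolding F_def by (meson order_trans)
qed

text \<open>Here \<open>g i j\<close> is the vector of colour \<open>i\<close> indexed by \<open>j\<close>. The hypothesis \<open>separated\<close> says that no open half-space bounded
  by a hyperplane through the origin contains all vectors of one colour, which by Farkas' lemma
  means that the origin lies in their convex hull.\<close>

theorem colourful_caratheodory:
  fixes g :: "'i \<Rightarrow> 'j \<Rightarrow> 'k \<Rightarrow> real"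
  assumes "finite I" "finite J" "finite K" "card K < card I"
    and separated: "\<And>i x. i \<in> I \<Longrightarrow> \<exists>j\<in>J. (\<Sum>k\<in>K. x k * g i j k) \<le> 0"
  shows "\<exists>ch. (\<forall>i\<in>I. ch i \<in> J) \<and> (\<exists>w\<in>simplex_weights I. \<forall>k\<in>K. (\<Sum>i\<in>I. w i * g i (ch i) k) = 0)"
proof -
  obtain i1 where "i1 \<in> I"
    using \<open>card K < card I\<close> by fastforce
  then have "J \<noteq> {}"
    using separated[OF \<open>i1 \<in> I\<close>, of "\<lambda>_. 0"] by auto
  then obtain ch0 w0 where ch0: "ch0 \<in> I \<rightarrow>\<^sub>E J" and w0: "w0 \<in> simplex_weights I"
    and optimal: "\<And>ch w. ch \<in> I \<rightarrow>\<^sub>E J \<Longrightarrow> w \<in> simplex_weights I \<Longrightarrow>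
      (\<Sum>k\<in>K. (\<Sum>i\<in>I. w0 i * g i (ch0 i) k)\<^sup>2) \<le> (\<Sum>k\<in>K. (\<Sum>i\<in>I. w i * g i (ch i) k)\<^sup>2)"
    using exists_min_norm_colourful_combination[OF assms(1,2) _ \<open>J \<noteq> {}\<close>] \<open>i1 \<in> I\<close> by blast
  define x where "x k = (\<Sum>i\<in>I. w0 i * g i (ch0 i) k)" for k
  define m where "m = (\<Sum>k\<in>K. (x k)\<^sup>2)"
  have inner_ge: "m \<le> (\<Sum>k\<in>K. x k * g i0 (ch i0) k)"
    if "ch \<in> I \<rightarrow>\<^sub>E J" "w \<in> simplex_weights I" "\<forall>k\<in>K. (\<Sum>i\<in>I. w i * g i (ch i) k) = x k" "i0 \<in> I"
    for ch w i0
    using simplex_min_norm_inner_ge[OF \<open>finite I\<close> that(4,2), where K = K and h = "\<lambda>i. g i (ch i)"]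
      optimal[OF that(1)] that(3) by (simp add: m_def x_def)
  show ?thesis
  proof (cases "m = 0")
    case True
    then have "\<forall>k\<in>K. x k = 0"
      using \<open>finite K\<close> by (simp add: m_def sum_nonneg_eq_0_iff)
    then show ?thesis
      using ch0 w0 unfolding x_def by blast
  next
    case False
    then have "m > 0"
      by (simp add: m_def order_less_le sum_nonneg)
    then obtain w1 i0 where w1: "w1 \<in> simplex_weights I" "i0 \<in> I" "w1 i0 = 0"
      "\<forall>k\<in>K. (\<Sum>i\<in>I. w1 i * g i (ch0 i) k) = x k"
      using min_norm_point_in_facet[OF assms(1,3,4) w0, where v = "\<lambda>i. g i (ch0 i)" and x = x]
        inner_ge[OF ch0 w0] by (auto simp: x_def m_def)
    \<comment> \<open>The vertex \<open>i0\<close> has weight zero, so its colour can be exchanged freely.\<close>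
    obtain j where j: "j \<in> J" "(\<Sum>k\<in>K. x k * g i0 j k) \<le> 0"
      using separated[OF w1(2)] by blast
    define ch1 where "ch1 = ch0(i0 := j)"
    have "ch1 \<in> I \<rightarrow>\<^sub>E J"
      using ch0 j(1) w1(2) by (auto simp: ch1_def PiE_iff extensional_def)
    moreover have "(\<Sum>i\<in>I. w1 i * g i (ch1 i) k) = (\<Sum>i\<in>I. w1 i * g i (ch0 i) k)" for k
      by (intro sum.cong) (auto simp: ch1_def w1(3))
    ultimately have "m \<le> (\<Sum>k\<in>K. x k * g i0 j k)"
      using inner_ge[of ch1 w1 i0] w1 by (simp add: ch1_def)
    then show ?thesis
      using j(2) \<open>m > 0\<close> by linarith
  qed
qed

section \<open>Tverberg's theorem\<close>

lemma tverberg_partition_of_balanced_colouring: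
  fixes A :: "('a::real_vector) set" and w :: "'a \<Rightarrow> real"
  assumes "finite A" "\<forall>a\<in>A. col a < r" "\<forall>a\<in>A. 0 \<le> w a" "m > 0"
    and mass: "\<And>j. j < r \<Longrightarrow> (\<Sum>a\<in>{a\<in>A. col a = j}. w a) = m"
    and moment: "\<And>j. j < r \<Longrightarrow> (\<Sum>a\<in>{a\<in>A. col a = j}. w a *\<^sub>R a) = p"
  shows "tverberg_partition A r ((\<lambda>j. {a\<in>A. col a = j}) ` {..<r})"
proof -
  define B where "B j = {a\<in>A. col a = j}" for j
  have B_ne: "B j \<noteq> {}" if "j < r" for j
    using mass[OF that] \<open>m > 0\<close> unfolding B_def[symmetric] by auto
  have "inj_on B {..<r}"
    using B_ne by (fastforce simp: B_def intro!: inj_onI)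
  moreover have "partition_on A (B ` {..<r})"
    using assms(2) B_ne by (intro partition_onI) (auto simp: B_def disjnt_def)
  moreover have "(1 / m) *\<^sub>R p \<in> convex hull (B j)" if "j < r" for j
  proof -
    have "finite (B j)"
      using \<open>finite A\<close> by (simp add: B_def)
    moreover have "\<forall>a\<in>B j. 0 \<le> w a / m"
      using assms(3,4) by (simp add: B_def)
    moreover have "(\<Sum>a\<in>B j. w a / m) = 1"
      using mass[OF that] \<open>m > 0\<close> by (simp add: B_def flip: sum_divide_distrib)
    moreover have "(\<Sum>a\<in>B j. (w a / m) *\<^sub>R a) = (1 / m) *\<^sub>R (\<Sum>a\<in>B j. w a *\<^sub>R a)"
      by (simp add: scaleR_sum_right)
    ultimately show ?thesis
      using moment[OF that] unfolding convex_hull_finite[OF \<open>finite (B j)\<close>]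
      by (auto simp: B_def)
  qed
  moreover have "(\<lambda>j. {a\<in>A. col a = j}) = B"
    by (simp add: B_def fun_eq_iff)
  ultimately show ?thesis
    unfolding tverberg_partition_def partition_into_def by (auto simp: card_image)
qed

text \<open>Sarkaria's lifting: a point \<open>a\<close> of colour \<open>j\<close> becomes the tensor \<open>(1, a) \<otimes> w\<^sub>j\<close>, where
  \<open>w\<^sub>j = e\<^sub>j\<close> for \<open>j < r - 1\<close> and \<open>w\<^sub>r\<^sub>-\<^sub>1 = -(e\<^sub>0 + \<dots> + e\<^sub>r\<^sub>-\<^sub>2)\<close> in \<open>\<real>\<^sup>r\<^sup>-\<^sup>1\<close>.
  These \<open>r\<close> vectors sum to zero, and \<open>\<Sum>\<^sub>j c\<^sub>j w\<^sub>j = 0\<close> forces all \<open>c\<^sub>j\<close> to be equal.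
  A coordinate of the lifted space is a pair \<open>(c, l)\<close> with \<open>l < r - 1\<close>, where \<open>c = None\<close> stands
  for the extra coordinate \<open>1\<close> of \<open>(1, a)\<close>.\<close>

definition homog_coord :: "real ^ 'd \<Rightarrow> 'd option \<Rightarrow> real" where
  "homog_coord a c = (case c of None \<Rightarrow> 1 | Some i \<Rightarrow> a $ i)"

definition sarkaria_lift :: "nat \<Rightarrow> real ^ 'd \<Rightarrow> nat \<Rightarrow> 'd option \<times> nat \<Rightarrow> real" where
  "sarkaria_lift r a j k = homog_coord a (fst k) * (if j = r - 1 then -1 else of_bool (snd k = j))"

lemma sarkaria_lift_separated:
  assumes "r \<ge> 1"
  shows "\<exists>j\<in>{..<r}. (\<Sum>k\<in>UNIV \<times> {..<r - 1}. x k * sarkaria_lift r a j k) \<le> 0"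
proof -
  have "(\<Sum>j<r. sarkaria_lift r a j k) = 0" if "k \<in> UNIV \<times> {..<r - 1}" for k
    using that \<open>r \<ge> 1\<close>
    by (cases r)
      (auto simp: sarkaria_lift_def sum.If_cases lessThan_Suc sum_distrib_left[symmetric])
  then have "(\<Sum>k\<in>UNIV \<times> {..<r - 1}. x k * (\<Sum>j<r. sarkaria_lift r a j k)) = 0"
    by simp
  then have "(\<Sum>j<r. \<Sum>k\<in>UNIV \<times> {..<r - 1}. x k * sarkaria_lift r a j k) = 0"
    by (simp add: sum.swap[of _ "{..<r}"] sum_distrib_left)
  then show ?thesis
    using sum_pos[of "{..<r}" "\<lambda>j. \<Sum>k\<in>UNIV \<times> {..<r - 1}. x k * sarkaria_lift r a j k"] \<open>r \<ge> 1\<close>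
    by force
qed

lemma sarkaria_lift_balanced:
  assumes "finite A" "j < r"
    and balanced: "\<forall>k\<in>UNIV \<times> {..<r - 1}. (\<Sum>a\<in>A. w a * sarkaria_lift r a (col a) k) = 0"
  shows "(\<Sum>a\<in>{a\<in>A. col a = j}. w a * homog_coord a c) =
    (\<Sum>a\<in>{a\<in>A. col a = r - 1}. w a * homog_coord a c)"
proof (cases "j = r - 1")
  case False
  have "w a * sarkaria_lift r a (col a) (c, j) =
      (if col a = j then w a * homog_coord a c else 0) -
      (if col a = r - 1 then w a * homog_coord a c else 0)" for a
    using False by (simp add: sarkaria_lift_def)
  then have "(\<Sum>a\<in>A. w a * sarkaria_lift r a (col a) (c, j)) =
      (\<Sum>a\<in>{a\<in>A. col a = j}. w a * homog_coord a c) -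
      (\<Sum>a\<in>{a\<in>A. col a = r - 1}. w a * homog_coord a c)"
    by (simp add: sum_subtractf sum.inter_filter \<open>finite A\<close>)
  moreover have "(c, j) \<in> UNIV \<times> {..<r - 1}"
    using False \<open>j < r\<close> by simp
  ultimately show ?thesis
    using balanced by fastforce
qed simp

theorem tverberg:
  fixes A :: "(real ^ 'd) set"
  assumes "finite A" "r \<ge> 1" "Tv CARD('d) r \<le> card A"
  shows "\<exists>P. tverberg_partition A r P"
proof -
  have "card ((UNIV :: 'd option set) \<times> {..<r - 1}) < card A"
    using assms(3) by (simp add: card_cartesian_product card_option Tv_def)
  then obtain col w where col: "\<forall>a\<in>A. col a \<in> {..<r}" and w: "w \<in> simplex_weights A"
    and balanced: "\<forall>k\<in>UNIV \<times> {..<r - 1}. (\<Sum>a\<in>A. w a * sarkaria_lift r a (col a) k) = 0"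
    using colourful_caratheodory[where g = "sarkaria_lift r", OF \<open>finite A\<close> finite_lessThan _ _
        sarkaria_lift_separated[OF \<open>r \<ge> 1\<close>]] by auto
  define u where "u c = (\<Sum>a\<in>{a\<in>A. col a = r - 1}. w a * homog_coord a c)" for c
  have class_sum_eq: "(\<Sum>a\<in>{a\<in>A. col a = j}. w a * homog_coord a c) = u c" if "j < r" for j c
    using sarkaria_lift_balanced[OF \<open>finite A\<close> that balanced] by (simp add: u_def)
  have "(\<Sum>j<r. \<Sum>a\<in>{a\<in>A. col a = j}. w a * homog_coord a None) = sum w A"
    unfolding homog_coord_def using col sum.group[OF \<open>finite A\<close> finite_lessThan, of col r w] by auto
  then have "r * u None = 1"
    using simplex_weightsD(3)[OF w] by (simp add: class_sum_eq)
  then have "u None > 0"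
    using zero_less_mult_iff[of "real r" "u None"] by simp
  moreover have "(\<Sum>a\<in>{a\<in>A. col a = j}. w a) = u None" if "j < r" for j
    using class_sum_eq[OF that, of None] by (simp add: homog_coord_def)
  moreover have "(\<Sum>a\<in>{a\<in>A. col a = j}. w a *\<^sub>R a) = (\<chi> i. u (Some i))" if "j < r" for j
    using class_sum_eq[OF that, of "Some _"] by (simp add: vec_eq_iff homog_coord_def sum_component)
  ultimately show ?thesis
    using tverberg_partition_of_balanced_colouring[of A col r w] \<open>finite A\<close> col
      simplex_weightsD(1)[OF w]
    by blast
qed

section \<open>Partitions agreeing off a point\<close>

lemma partition_on_block_eq:
  "partition_on S P \<Longrightarrow> B \<in> P \<Longrightarrow> B' \<in> P \<Longrightarrow> a \<in> B \<Longrightarrow> a \<in> B' \<Longrightarrow> B = B'"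
  using disjointD[OF partition_onD2] by blast

definition same_block :: "'a set set \<Rightarrow> 'a \<Rightarrow> 'a \<Rightarrow> bool" where
  "same_block P a b \<longleftrightarrow> (\<exists>B\<in>P. a \<in> B \<and> b \<in> B)"

lemma same_block_sym: "same_block P a b \<Longrightarrow> same_block P b a"
  by (auto simp: same_block_def)

lemma same_block_refl: "partition_on S P \<Longrightarrow> a \<in> S \<Longrightarrow> same_block P a a"
  by (auto simp: same_block_def dest: partition_onD1)

lemma same_block_trans:
  assumes "partition_on S P" "same_block P a b" "same_block P b c"
  shows "same_block P a c"
proof -
  obtain B B' where "B \<in> P" "a \<in> B" "b \<in> B" "B' \<in> P" "b \<in> B'" "c \<in> B'"
    using assms(2,3) by (auto simp: same_block_def)
  moreover from this have "B = B'"
    using partition_on_block_eq[OF assms(1)] by blast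
  ultimately show ?thesis
    by (auto simp: same_block_def)
qed

lemma same_block_in: "partition_on S P \<Longrightarrow> same_block P a b \<Longrightarrow> b \<in> S"
  by (auto simp: same_block_def dest: partition_onD1)

lemma block_in_partition:
  assumes "partition_on S P" "a \<in> S"
  shows "{b. same_block P a b} \<in> P"
proof -
  have "{(x, y). \<exists>B\<in>P. x \<in> B \<and> y \<in> B} `` {a} \<in> S // {(x, y). \<exists>B\<in>P. x \<in> B \<and> y \<in> B}"
    using assms(2) by (rule quotientI)
  then show ?thesis
    by (simp add: partition_on_eq_quotient[OF assms(1)] same_block_def)
qed

lemma partition_on_eqI_same_block:
  assumes "partition_on S P" "partition_on S Q"
    and "\<And>a b. a \<in> S \<Longrightarrow> b \<in> S \<Longrightarrow> same_block P a b \<longleftrightarrow> same_block Q a b"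
  shows "P = Q"
proof -
  have "same_block P a b \<longleftrightarrow> same_block Q a b" for a b
    using assms(3)[of a b] same_block_in[OF assms(1), of a b] same_block_in[OF assms(2), of a b]
      same_block_in[OF assms(1), of b a] same_block_in[OF assms(2), of b a] same_block_sym
    by metis
  then have "{(a, b). \<exists>B\<in>P. a \<in> B \<and> b \<in> B} = {(a, b). \<exists>B\<in>Q. a \<in> B \<and> b \<in> B}"
    unfolding same_block_def by simp
  then show ?thesis
    using partition_on_eq_quotient[OF assms(1)] partition_on_eq_quotient[OF assms(2)] by metis
qed

lemma same_block_restrict_partition:
  "a \<in> T \<Longrightarrow> b \<in> T \<Longrightarrow> same_block (restrict_partition P T) a b \<longleftrightarrow> same_block P a b"
  by (auto simp: same_block_def restrict_partition_def)

lemma partition_on_restrict_partition: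
  assumes "partition_on S P" "T \<subseteq> S"
  shows "partition_on T (restrict_partition P T)"
proof -
  have "T \<inter> S = T"
    using assms(2) by blast
  then show ?thesis
    using partition_on_restrict[OF assms(1), of T] by (simp add: restrict_partition_def Int_commute)
qed

lemma restrict_partition_eq_iff:
  assumes "partition_on S P" "partition_on S Q" "T \<subseteq> S"
  shows "restrict_partition P T = restrict_partition Q T \<longleftrightarrow>
    (\<forall>a\<in>T. \<forall>b\<in>T. same_block P a b \<longleftrightarrow> same_block Q a b)"
proof
  assume "restrict_partition P T = restrict_partition Q T"
  then show "\<forall>a\<in>T. \<forall>b\<in>T. same_block P a b \<longleftrightarrow> same_block Q a b"
    by (metis same_block_restrict_partition)
next
  assume "\<forall>a\<in>T. \<forall>b\<in>T. same_block P a b \<longleftrightarrow> same_block Q a b"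
  then show "restrict_partition P T = restrict_partition Q T"
    using partition_on_eqI_same_block[OF partition_on_restrict_partition[OF assms(1,3)]
        partition_on_restrict_partition[OF assms(2,3)]]
    by (simp add: same_block_restrict_partition)
qed

lemma restrict_partition_remove:
  assumes "partition_on S P"
  shows "restrict_partition P (S - {x}) = (\<lambda>B. B - {x}) ` (P - {{x}})"
proof -
  have "(\<lambda>B. B \<inter> (S - {x})) ` P = (\<lambda>B. B - {x}) ` P"
    using partition_onD1[OF assms] by (intro image_cong) auto
  moreover have "B - {x} = {} \<longleftrightarrow> B = {x}" if "B \<in> P" for B
    using that partition_onD3[OF assms] by (auto simp: subset_singleton_iff)
  then have "(\<lambda>B. B - {x}) ` P - {{}} = (\<lambda>B. B - {x}) ` (P - {{x}})"
    by blast
  ultimately show ?thesis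
    by (simp add: restrict_partition_def)
qed

lemma card_restrict_partition_remove:
  assumes "partition_on S P"
  shows "card (restrict_partition P (S - {x})) = card (P - {{x}})"
proof -
  have "inj_on (\<lambda>B. B - {x}) (P - {{x}})"
  proof (rule inj_onI)
    fix B1 B2 assume B: "B1 \<in> P - {{x}}" "B2 \<in> P - {{x}}" "B1 - {x} = B2 - {x}"
    then have "B1 - {x} \<noteq> {}"
      using partition_onD3[OF assms] by (auto simp: subset_singleton_iff)
    then obtain a where "a \<in> B1" "a \<in> B2"
      using B(3) by blast
    then show "B1 = B2"
      using partition_on_block_eq[OF assms] B(1,2) by blast
  qed
  then show ?thesis
    by (simp add: restrict_partition_remove[OF assms] card_image)
qed

definition agree_off :: "'a set \<Rightarrow> 'a \<Rightarrow> 'a set set \<Rightarrow> 'a set set \<Rightarrow> bool" where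
  "agree_off S x P Q \<longleftrightarrow> (\<forall>a\<in>S - {x}. \<forall>b\<in>S - {x}. same_block P a b \<longleftrightarrow> same_block Q a b)"

lemma agree_off_refl: "agree_off S x P P"
  by (simp add: agree_off_def)

lemma agree_off_sym: "agree_off S x P Q \<Longrightarrow> agree_off S x Q P"
  by (auto simp: agree_off_def)

lemma agree_off_trans: "agree_off S x P Q \<Longrightarrow> agree_off S x Q R \<Longrightarrow> agree_off S x P R"
  by (auto simp: agree_off_def)

lemma agree_offD:
  "agree_off S x P Q \<Longrightarrow> a \<in> S \<Longrightarrow> b \<in> S \<Longrightarrow> a \<noteq> x \<Longrightarrow> b \<noteq> x \<Longrightarrow> same_block P a b \<longleftrightarrow> same_block Q a b"
  by (simp add: agree_off_def)

lemma restrict_partition_remove_eq_iff: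
  "partition_on S P \<Longrightarrow> partition_on S Q \<Longrightarrow>
    restrict_partition P (S - {x}) = restrict_partition Q (S - {x}) \<longleftrightarrow> agree_off S x P Q"
  by (simp add: restrict_partition_eq_iff agree_off_def)

lemma partition_distance_eq_1_iff:
  assumes "finite S" "partition_on S P" "partition_on S Q"
  shows "partition_distance S P Q = 1 \<longleftrightarrow> P \<noteq> Q \<and> (\<exists>x\<in>S. agree_off S x P Q)"
proof -
  define M where
    "M = {card X | X. X \<subseteq> S \<and> restrict_partition P (S - X) = restrict_partition Q (S - X)}"
  have "M \<subseteq> card ` Pow S"
    by (auto simp: M_def)
  then have "finite M"
    using \<open>finite S\<close> by (simp add: finite_subset)
  have "card S \<in> M"
    by (auto simp: M_def restrict_partition_def intro!: exI[of _ S])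
  have "0 \<in> M \<longleftrightarrow> P = Q"
  proof -
    have "0 \<in> M \<longleftrightarrow> restrict_partition P S = restrict_partition Q S"
    proof
      assume "0 \<in> M"
      then obtain X where "card X = 0" "X \<subseteq> S"
        "restrict_partition P (S - X) = restrict_partition Q (S - X)"
        by (auto simp: M_def)
      then show "restrict_partition P S = restrict_partition Q S"
        using \<open>finite S\<close> by (simp add: finite_subset)
    next
      assume "restrict_partition P S = restrict_partition Q S"
      then show "0 \<in> M"
        unfolding M_def by (intro CollectI exI[of _ "{}"]) simp
    qed
    also have "\<dots> \<longleftrightarrow> P = Q"
      using restrict_partition_eq_iff[OF assms(2,3) order_refl]
        partition_on_eqI_same_block[OF assms(2,3)]
      by auto
    finally show ?thesis .
  qed
  moreover have "1 \<in> M \<longleftrightarrow> (\<exists>x\<in>S. agree_off S x P Q)"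
  proof
    assume "1 \<in> M"
    then obtain X where "card X = 1" "X \<subseteq> S"
      "restrict_partition P (S - X) = restrict_partition Q (S - X)"
      by (auto simp: M_def)
    then show "\<exists>x\<in>S. agree_off S x P Q"
      by (auto simp: card_1_singleton_iff restrict_partition_remove_eq_iff[OF assms(2,3)])
  next
    assume "\<exists>x\<in>S. agree_off S x P Q"
    then obtain x where "x \<in> S" "restrict_partition P (S - {x}) = restrict_partition Q (S - {x})"
      using restrict_partition_remove_eq_iff[OF assms(2,3)] by blast
    then show "1 \<in> M"
      unfolding M_def by (intro CollectI exI[of _ "{x}"]) simp
  qed
  moreover have "(\<forall>a\<in>M. 1 \<le> a) \<longleftrightarrow> 0 \<notin> M"
    by (metis less_one not_le)
  ultimately have "Min M = 1 \<longleftrightarrow> P \<noteq> Q \<and> (\<exists>x\<in>S. agree_off S x P Q)"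
    using Min_eq_iff[OF \<open>finite M\<close>, of 1] \<open>card S \<in> M\<close> by blast
  then show ?thesis
    by (simp add: partition_distance_def M_def)
qed

lemma partition_on_eqI_agree_off:
  assumes "partition_on S P" "partition_on S Q" "agree_off S x P Q"
    and "\<And>b. b \<in> S \<Longrightarrow> same_block P x b \<longleftrightarrow> same_block Q x b"
  shows "P = Q"
proof (rule partition_on_eqI_same_block[OF assms(1,2)])
  fix a b assume "a \<in> S" "b \<in> S"
  consider "a = x" | "b = x" | "a \<noteq> x" "b \<noteq> x"
    by blast
  then show "same_block P a b \<longleftrightarrow> same_block Q a b"
  proof cases
    case 1
    then show ?thesis
      using assms(4)[OF \<open>b \<in> S\<close>] by simp
  next
    case 2
    then show ?thesis
      using assms(4)[OF \<open>a \<in> S\<close>] same_block_sym by metis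
  next
    case 3
    then show ?thesis
      using agree_offD[OF assms(3) \<open>a \<in> S\<close> \<open>b \<in> S\<close>] by simp
  qed
qed

lemma agree_off_eqI:
  assumes P: "partition_on S P" and Q: "partition_on S Q" and "agree_off S x P Q"
    and u: "u \<in> S" "u \<noteq> x" "same_block P x u" "same_block Q x u"
  shows "P = Q"
proof (rule partition_on_eqI_agree_off[OF P Q \<open>agree_off S x P Q\<close>])
  fix b assume "b \<in> S"
  show "same_block P x b \<longleftrightarrow> same_block Q x b"
  proof (cases "b = x")
    case True
    then show ?thesis
      using same_block_trans[OF P u(3) same_block_sym[OF u(3)]]
        same_block_trans[OF Q u(4) same_block_sym[OF u(4)]] by simp
  next
    case False
    have "same_block P x b \<longleftrightarrow> same_block P u b"
      using same_block_trans[OF P] same_block_sym u(3) by metis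
    also have "\<dots> \<longleftrightarrow> same_block Q u b"
      using agree_offD[OF \<open>agree_off S x P Q\<close> u(1) \<open>b \<in> S\<close> u(2) False] .
    also have "\<dots> \<longleftrightarrow> same_block Q x b"
      using same_block_trans[OF Q] same_block_sym u(4) by metis
    finally show ?thesis .
  qed
qed

lemma same_block_singleton:
  assumes "partition_on S P" "{x} \<in> P"
  shows "same_block P x b \<longleftrightarrow> b = x"
proof
  assume "same_block P x b"
  then obtain B where "B \<in> P" "x \<in> B" "b \<in> B"
    by (auto simp: same_block_def)
  moreover from this have "B = {x}"
    using partition_on_block_eq[OF assms(1) _ assms(2)] by blast
  ultimately show "b = x"
    by simp
qed (use assms(2) in \<open>auto simp: same_block_def\<close>)

lemma agree_off_singleton_eq:
  assumes "finite S" and P: "partition_on S P" and Q: "partition_on S Q" and "card P = card Q"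
    and "agree_off S x P Q" "{x} \<in> P"
  shows "P = Q"
proof -
  have "finite P" "finite Q"
    using \<open>finite S\<close> P Q by (simp_all add: finite_elements)
  have "restrict_partition P (S - {x}) = restrict_partition Q (S - {x})"
    using \<open>agree_off S x P Q\<close> restrict_partition_remove_eq_iff[OF P Q] by simp
  then have "card (P - {{x}}) = card (Q - {{x}})"
    by (metis card_restrict_partition_remove[OF P] card_restrict_partition_remove[OF Q])
  \<comment> \<open>Removing \<open>x\<close> loses a block of \<open>P\<close>, so it must lose one of \<open>Q\<close> as well.\<close>
  moreover have "card (P - {{x}}) < card P"
    using \<open>finite P\<close> \<open>{x} \<in> P\<close> by (rule card_Diff1_less)
  ultimately have "{x} \<in> Q"
    using \<open>card P = card Q\<close> by (metis Diff_empty Diff_insert0 less_irrefl)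
  then show ?thesis
    using partition_on_eqI_agree_off[OF P Q \<open>agree_off S x P Q\<close>]
      same_block_singleton[OF P \<open>{x} \<in> P\<close>] same_block_singleton[OF Q] by simp
qed

section \<open>Cliques of partitions differing in one point\<close>

definition differ_only_at :: "'a set \<Rightarrow> 'a \<Rightarrow> 'a set set \<Rightarrow> 'a set set \<Rightarrow> bool" where
  "differ_only_at S x P Q \<longleftrightarrow> partition_on S P \<and> partition_on S Q \<and> card P = card Q \<and>
     x \<in> S \<and> P \<noteq> Q \<and> agree_off S x P Q"

lemma differ_only_at_sym: "differ_only_at S x P Q \<Longrightarrow> differ_only_at S x Q P"
  by (auto simp: differ_only_at_def agree_off_sym)

lemma differ_only_at_separates:
  assumes "differ_only_at S x P Q" "u \<in> S" "u \<noteq> x" "same_block P x u"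
  shows "\<not> same_block Q x u"
  using assms agree_off_eqI[of S P Q x u] by (auto simp: differ_only_at_def)

lemma differ_only_at_partner:
  assumes "finite S" "differ_only_at S x P Q"
  obtains u where "u \<in> S" "u \<noteq> x" "same_block P x u" "\<not> same_block Q x u"
proof -
  have P: "partition_on S P" and "x \<in> S"
    using assms(2) by (auto simp: differ_only_at_def)
  have "\<exists>u\<in>S. u \<noteq> x \<and> same_block P x u"
  proof (rule ccontr)
    assume no_partner: "\<not> (\<exists>u\<in>S. u \<noteq> x \<and> same_block P x u)"
    then have "{u. same_block P x u} = {x}"
      using same_block_in[OF P] same_block_refl[OF P \<open>x \<in> S\<close>] by blast
    then have "{x} \<in> P"
      using block_in_partition[OF P \<open>x \<in> S\<close>] by simp
    then show False
      using assms agree_off_singleton_eq[of S P Q x] by (auto simp: differ_only_at_def)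
  qed
  then show ?thesis
    using that differ_only_at_separates[OF assms(2)] by blast
qed

definition partition_triangle ::
    "'a set \<Rightarrow> 'a \<Rightarrow> 'a \<Rightarrow> 'a \<Rightarrow> 'a set set \<Rightarrow> 'a set set \<Rightarrow> 'a set set \<Rightarrow> bool" where
  "partition_triangle S x y z P Q R \<longleftrightarrow>
     differ_only_at S x P Q \<and> differ_only_at S y P R \<and> differ_only_at S z Q R \<and> x \<noteq> y"

lemma partition_triangle_swap:
  "partition_triangle S x y z P Q R \<Longrightarrow> partition_triangle S y x z P R Q"
  by (auto simp: partition_triangle_def differ_only_at_sym)

text \<open>If neither \<open>y\<close> nor \<open>z\<close> lies in \<open>{x, v}\<close>, then \<open>R\<close> agrees with both \<open>P\<close> and \<open>Q\<close> on this pair.\<close>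

lemma triangle_disagreement:
  assumes "partition_triangle S x y z P Q R"
    and "v \<in> S" "v \<noteq> x" "same_block P x v \<longleftrightarrow> \<not> same_block Q x v"
  shows "v = y \<or> z = x \<or> z = v"
proof -
  have "agree_off S y P R" "agree_off S z Q R" "x \<in> S" "x \<noteq> y"
    using assms(1) by (auto simp: partition_triangle_def differ_only_at_def)
  then show ?thesis
    using assms(2-4) agree_offD[of S y P R x v] agree_offD[of S z Q R x v] by auto
qed

lemma triangle_apex_ne:
  assumes "finite S" "partition_triangle S x y z P Q R"
  shows "z \<noteq> x" "z \<noteq> y"
proof -
  have ne_y: "z \<noteq> y" if "partition_triangle S x y z P Q R" for x y z P Q R
  proof
    assume "z = y"
    have PQ: "differ_only_at S x P Q" and "x \<noteq> y"
      using that by (simp_all add: partition_triangle_def)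
    obtain a where a: "a \<in> S" "a \<noteq> x" "same_block P x a" "\<not> same_block Q x a"
      using differ_only_at_partner[OF \<open>finite S\<close> PQ] .
    obtain b where b: "b \<in> S" "b \<noteq> x" "same_block Q x b" "\<not> same_block P x b"
      using differ_only_at_partner[OF \<open>finite S\<close> differ_only_at_sym[OF PQ]] .
    have "a = y" "b = y"
      using triangle_disagreement[OF that a(1,2)] triangle_disagreement[OF that b(1,2)]
        a(3,4) b(3,4) \<open>z = y\<close> \<open>x \<noteq> y\<close> by auto
    then show False
      using a(3) b(4) by simp
  qed
  show "z \<noteq> x"
    using ne_y[OF partition_triangle_swap[OF assms(2)]] .
  show "z \<noteq> y"
    using ne_y[OF assms(2)] .
qed

lemma triangle_same_block:
  assumes "finite S" "partition_triangle S x y z P Q R"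
  shows "same_block P x y"
proof (rule ccontr)
  assume "\<not> same_block P x y"
  have P: "partition_on S P" and PQ: "differ_only_at S x P Q" and PR: "differ_only_at S y P R"
    using assms(2) by (auto simp: partition_triangle_def differ_only_at_def)
  obtain a where a: "a \<in> S" "a \<noteq> x" "same_block P x a" "\<not> same_block Q x a"
    using differ_only_at_partner[OF \<open>finite S\<close> PQ] .
  then have "same_block P x z"
    using triangle_disagreement[OF assms(2) a(1,2)] triangle_apex_ne[OF assms] \<open>\<not> same_block P x y\<close>
    by auto
  obtain c where c: "c \<in> S" "c \<noteq> y" "same_block P y c" "\<not> same_block R y c"
    using differ_only_at_partner[OF \<open>finite S\<close> PR] .
  then have "same_block P y z"
    using triangle_disagreement[OF partition_triangle_swap[OF assms(2)] c(1,2)]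
      triangle_apex_ne[OF assms] \<open>\<not> same_block P x y\<close> same_block_sym[of P y x] by auto
  then show False
    using \<open>\<not> same_block P x y\<close> same_block_trans[OF P \<open>same_block P x z\<close> same_block_sym] by blast
qed

lemma triangle_moved:
  assumes "finite S" "partition_triangle S x y z P Q R"
  shows "same_block Q x z" "\<not> same_block P x z"
proof -
  have "differ_only_at S x Q P"
    using assms(2) by (simp add: partition_triangle_def differ_only_at_sym)
  then obtain b where b: "b \<in> S" "b \<noteq> x" "same_block Q x b" "\<not> same_block P x b"
    using differ_only_at_partner[OF \<open>finite S\<close>] by blast
  moreover from this have "b = z"
    using triangle_disagreement[OF assms(2) b(1,2)] triangle_apex_ne[OF assms]
      triangle_same_block[OF assms] by auto
  ultimately show "same_block Q x z" "\<not> same_block P x z"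
    by simp_all
qed

lemma triangle_block_x:
  assumes "finite S" "partition_triangle S x y z P Q R" "u \<in> S" "same_block P x u"
  shows "u = x \<or> u = y"
proof (rule ccontr)
  assume neg: "\<not> (u = x \<or> u = y)"
  have "differ_only_at S x P Q"
    using assms(2) by (simp add: partition_triangle_def)
  then have "\<not> same_block Q x u"
    using differ_only_at_separates[OF _ assms(3) _ assms(4)] neg by blast
  then have "z = u"
    using triangle_disagreement[OF assms(2,3)] triangle_apex_ne(1)[OF assms(1,2)] assms(4) neg
    by auto
  then show False
    using triangle_moved(2)[OF assms(1,2)] assms(4) by simp
qed

lemma triangle_block_z:
  assumes "finite S" "partition_triangle S x y z P Q R" "u \<in> S" "same_block P z u"
  shows "u = z"
proof (rule ccontr)
  assume "u \<noteq> z"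
  have PQ: "differ_only_at S x P Q"
    using assms(2) by (simp add: partition_triangle_def)
  have Q: "partition_on S Q" and R: "partition_on S R" and "y \<in> S" "z \<in> S" "x \<noteq> y"
    and agree: "agree_off S x P Q" "agree_off S y P R" "agree_off S z Q R"
    using assms(2) by (auto simp: differ_only_at_def partition_triangle_def)
  note ne = triangle_apex_ne[OF assms(1,2)]
  note swapped = partition_triangle_swap[OF assms(2)]
  have "\<not> same_block P z x" "\<not> same_block P z y"
    using triangle_moved(2)[OF assms(1,2)] triangle_moved(2)[OF assms(1) swapped]
      same_block_sym[of P z x] same_block_sym[of P z y] by blast+
  then have "u \<noteq> x" "u \<noteq> y"
    using assms(4) by auto
  then have "same_block Q z u" "same_block R z u"
    using agree_offD[OF agree(1) \<open>z \<in> S\<close> assms(3) ne(1)]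
      agree_offD[OF agree(2) \<open>z \<in> S\<close> assms(3) ne(2)]
      assms(4) by simp_all
  then have "same_block Q x u" "same_block R y u"
    using same_block_trans[OF Q triangle_moved(1)[OF assms(1,2)]]
      same_block_trans[OF R triangle_moved(1)[OF assms(1) swapped]] by simp_all
  moreover have "same_block Q y u \<longleftrightarrow> same_block R y u"
    using agree_offD[OF agree(3) \<open>y \<in> S\<close> assms(3) ne(2)[symmetric] \<open>u \<noteq> z\<close>] .
  ultimately have "same_block Q x y"
    using same_block_trans[OF Q \<open>same_block Q x u\<close> same_block_sym] by blast
  then show False
    using differ_only_at_separates[OF PQ \<open>y \<in> S\<close> \<open>x \<noteq> y\<close>[symmetric]
        triangle_same_block[OF assms(1,2)]]
    by simp
qed

lemma triangle_third_unique:
  assumes "finite S" "partition_triangle S x y z P Q R" "partition_triangle S x y z' P Q T"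
  shows "T = R"
proof -
  have Q: "partition_on S Q" and "z \<in> S" "z' \<in> S" "x \<in> S"
    and "agree_off S x P Q" "agree_off S y P R" "agree_off S y P T"
    using assms(2,3) by (auto simp: partition_triangle_def differ_only_at_def)
  have "same_block Q z z'"
    using same_block_trans[OF Q same_block_sym[OF triangle_moved(1)[OF assms(1,2)]]
        triangle_moved(1)[OF assms(1,3)]] .
  then have "same_block P z z'"
    using agree_offD[OF \<open>agree_off S x P Q\<close> \<open>z \<in> S\<close> \<open>z' \<in> S\<close>]
      triangle_apex_ne(1)[OF assms(1,2)] triangle_apex_ne(1)[OF assms(1,3)] by simp
  then have "z' = z"
    using triangle_block_z[OF assms(1,2) \<open>z' \<in> S\<close>] by simp
  \<comment> \<open>Both \<open>R\<close> and \<open>T\<close> arise from \<open>P\<close> by moving \<open>y\<close> to the block of \<open>z\<close>.\<close>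
  then have "same_block T y z"
    using triangle_moved(1)[OF assms(1) partition_triangle_swap[OF assms(3)]] by simp
  moreover have "agree_off S y R T"
    using agree_off_trans[OF agree_off_sym \<open>agree_off S y P T\<close>] \<open>agree_off S y P R\<close> by blast
  moreover have "partition_on S R" "partition_on S T"
    using assms(2,3) by (auto simp: partition_triangle_def differ_only_at_def)
  ultimately show "T = R"
    using agree_off_eqI[of S R T y z] \<open>z \<in> S\<close> triangle_apex_ne(2)[OF assms(1,2)]
      triangle_moved(1)[OF assms(1) partition_triangle_swap[OF assms(2)]] by auto
qed

lemma triangle_small_partition:
  assumes "finite S" "partition_triangle S x y z P Q R" "card P \<le> 2"
  shows "card P = 2" "card S \<le> 3"
proof -
  have P: "partition_on S P" and "x \<in> S" "z \<in> S"
    using assms(2) by (auto simp: partition_triangle_def differ_only_at_def)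
  define Bx where "Bx = {u. same_block P x u}"
  define Bz where "Bz = {u. same_block P z u}"
  have "x \<in> Bx" "x \<notin> Bz"
    using triangle_moved(2)[OF assms(1,2)] same_block_refl[OF P \<open>x \<in> S\<close>] same_block_sym[of P z x]
    by (auto simp: Bx_def Bz_def)
  then have "Bx \<noteq> Bz"
    by blast
  moreover have "{Bx, Bz} \<subseteq> P"
    using block_in_partition[OF P] \<open>x \<in> S\<close> \<open>z \<in> S\<close> by (simp add: Bx_def Bz_def)
  moreover have "finite P"
    using \<open>finite S\<close> P by (simp add: finite_elements)
  ultimately have "P = {Bx, Bz}"
    using \<open>card P \<le> 2\<close> by (metis card_2_iff card_subset_eq le_antisym card_mono)
  then show "card P = 2"
    using \<open>Bx \<noteq> Bz\<close> by simp
  have "Bx \<subseteq> {x, y}" "Bz \<subseteq> {z}"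
    using triangle_block_x[OF assms(1,2)] triangle_block_z[OF assms(1,2)] same_block_in[OF P]
    by (auto simp: Bx_def Bz_def)
  then have "S \<subseteq> {x, y, z}"
    using partition_onD1[OF P] \<open>P = {Bx, Bz}\<close> by auto
  then have "card S \<le> card {x, y, z}"
    by (intro card_mono) auto
  also have "\<dots> \<le> 3"
    by (simp add: card_insert_if)
  finally show "card S \<le> 3" .
qed

lemma triangle_clique_subset:
  assumes "finite S"
    and clique: "\<And>P' Q'. P' \<in> C \<Longrightarrow> Q' \<in> C \<Longrightarrow> P' \<noteq> Q' \<Longrightarrow> \<exists>v. differ_only_at S v P' Q'"
    and "P \<in> C" "Q \<in> C" "R \<in> C" and tri: "partition_triangle S x y z P Q R"
  shows "C \<subseteq> {P, Q, R}"
proof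
  fix T assume "T \<in> C"
  show "T \<in> {P, Q, R}"
  proof (rule ccontr)
    assume T: "T \<notin> {P, Q, R}"
    obtain w where PT: "differ_only_at S w P T"
      using clique[OF \<open>P \<in> C\<close> \<open>T \<in> C\<close>] T by auto
    obtain z' where QT: "differ_only_at S z' Q T"
      using clique[OF \<open>Q \<in> C\<close> \<open>T \<in> C\<close>] T by auto
    obtain z'' where RT: "differ_only_at S z'' R T"
      using clique[OF \<open>R \<in> C\<close> \<open>T \<in> C\<close>] T by auto
    have PQ: "differ_only_at S x P Q"
      using tri by (simp add: partition_triangle_def)
    show False
    proof (cases "w = x")
      case True
      then have "partition_triangle S y x z'' P R T"
        using partition_triangle_swap[OF tri] PT RT by (simp add: partition_triangle_def)
      then show False
        using triangle_third_unique[OF \<open>finite S\<close> partition_triangle_swap[OF tri]] T by blast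
    next
      case False
      then have "partition_triangle S x w z' P Q T"
        using PQ PT QT by (simp add: partition_triangle_def)
      then have "same_block P x w"
        using triangle_same_block[OF \<open>finite S\<close>] by blast
      then have "w = y"
        using triangle_block_x[OF \<open>finite S\<close> tri] PT False by (auto simp: differ_only_at_def)
      then have "partition_triangle S x y z' P Q T"
        using PQ PT QT tri by (simp add: partition_triangle_def)
      then show False
        using triangle_third_unique[OF \<open>finite S\<close> tri] T by blast
    qed
  qed
qed

lemma block_remove_in_restrict_partition:
  assumes P: "partition_on S P" and "x \<in> S" "u \<in> S" "u \<noteq> x" "same_block P x u"
  shows "{v. same_block P x v} - {x} \<in> restrict_partition P (S - {x})"
proof -
  have "{v. same_block P x v} - {x} = {v. same_block P x v} \<inter> (S - {x})"
    using same_block_in[OF P] by blast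
  moreover have "{v. same_block P x v} - {x} \<noteq> {}"
    using assms(4,5) by blast
  ultimately show ?thesis
    using block_in_partition[OF P \<open>x \<in> S\<close>] by (auto simp: restrict_partition_def)
qed

lemma card_sunflower_le:
  assumes "finite S" "x \<in> S" and P: "partition_on S P"
    and C: "\<And>Q. Q \<in> C \<Longrightarrow> partition_on S Q \<and> card Q = card P \<and> agree_off S x P Q"
  shows "card C \<le> card P"
proof (cases "card C \<le> 1")
  case True
  have "finite P" "P \<noteq> {}"
    using finite_elements[OF \<open>finite S\<close> P] partition_onD1[OF P] \<open>x \<in> S\<close> by auto
  then have "1 \<le> card P"
    by (simp add: Suc_le_eq card_gt_0_iff)
  then show ?thesis
    using True by simp
next
  case False
  then obtain Q1 Q2 where "Q1 \<in> C" "Q2 \<in> C" "Q1 \<noteq> Q2"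
    by (metis One_nat_def card.infinite card_le_Suc0_iff_eq zero_le)
  have agree: "agree_off S x Q Q'" if "Q \<in> C" "Q' \<in> C" for Q Q'
    using C[OF that(1)] C[OF that(2)] agree_off_trans agree_off_sym by metis
  have partner: "\<exists>u\<in>S. u \<noteq> x \<and> same_block Q x u" if "Q \<in> C" for Q
  proof -
    obtain Q' where "Q' \<in> C" "Q' \<noteq> Q"
      using \<open>Q1 \<in> C\<close> \<open>Q2 \<in> C\<close> \<open>Q1 \<noteq> Q2\<close> by metis
    then have "differ_only_at S x Q Q'"
      using C[OF that] C[OF \<open>Q' \<in> C\<close>] agree[OF that \<open>Q' \<in> C\<close>] \<open>x \<in> S\<close>
      by (auto simp: differ_only_at_def)
    then show ?thesis
      using differ_only_at_partner[OF \<open>finite S\<close>] by metis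
  qed
  define \<phi> where "\<phi> Q = {u. same_block Q x u} - {x}" for Q
  \<comment> \<open>Each member of \<open>C\<close> is recovered from the block of the common restriction that \<open>x\<close> joins.\<close>
  have "\<phi> Q \<in> restrict_partition P (S - {x})" if "Q \<in> C" for Q
    using block_remove_in_restrict_partition[of S Q x] partner[OF that] \<open>x \<in> S\<close> C[OF that]
      restrict_partition_remove_eq_iff[OF P, of Q x] by (auto simp: \<phi>_def)
  moreover have "inj_on \<phi> C"
  proof (rule inj_onI)
    fix Q Q' assume "Q \<in> C" "Q' \<in> C" "\<phi> Q = \<phi> Q'"
    obtain u where "u \<in> S" "u \<noteq> x" "same_block Q x u"
      using partner[OF \<open>Q \<in> C\<close>] by blast
    moreover from this have "same_block Q' x u"
      using \<open>\<phi> Q = \<phi> Q'\<close> by (auto simp: \<phi>_def)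
    ultimately show "Q = Q'"
      using agree_off_eqI[OF _ _ agree[OF \<open>Q \<in> C\<close> \<open>Q' \<in> C\<close>]] C[OF \<open>Q \<in> C\<close>] C[OF \<open>Q' \<in> C\<close>]
      by blast
  qed
  moreover have "finite P"
    using finite_elements[OF \<open>finite S\<close> P] .
  ultimately have "card C \<le> card (restrict_partition P (S - {x}))"
    by (intro card_inj_on_le) (auto simp: restrict_partition_def)
  also have "\<dots> \<le> card P"
    using card_restrict_partition_remove[OF P] \<open>finite P\<close> by (simp add: card_mono)
  finally show ?thesis .
qed

lemma exists_partition_triangle:
  assumes clique: "\<And>P Q. P \<in> C \<Longrightarrow> Q \<in> C \<Longrightarrow> P \<noteq> Q \<Longrightarrow> \<exists>x. differ_only_at S x P Q"
    and "P \<in> C" "Q \<in> C" "P \<noteq> Q" and not_sunflower: "\<not> (\<exists>x\<in>S. \<forall>R\<in>C. agree_off S x P R)"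
  obtains x y z R where "R \<in> C" "partition_triangle S x y z P Q R"
proof -
  obtain x where PQ: "differ_only_at S x P Q"
    using clique[OF \<open>P \<in> C\<close> \<open>Q \<in> C\<close> \<open>P \<noteq> Q\<close>] by blast
  then obtain R where "R \<in> C" "\<not> agree_off S x P R"
    using not_sunflower by (auto simp: differ_only_at_def)
  moreover have "agree_off S x P Q"
    using PQ by (simp add: differ_only_at_def)
  ultimately have "R \<noteq> P" "R \<noteq> Q"
    using agree_off_refl by metis+
  obtain y where PR: "differ_only_at S y P R"
    using clique[OF \<open>P \<in> C\<close> \<open>R \<in> C\<close>] \<open>R \<noteq> P\<close> by metis
  then have "x \<noteq> y"
    using \<open>\<not> agree_off S x P R\<close> by (auto simp: differ_only_at_def)
  obtain z where "differ_only_at S z Q R"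
    using clique[OF \<open>Q \<in> C\<close> \<open>R \<in> C\<close>] \<open>R \<noteq> Q\<close> by metis
  then show ?thesis
    using that[OF \<open>R \<in> C\<close>] PQ PR \<open>x \<noteq> y\<close> by (simp add: partition_triangle_def)
qed

lemma card_partition_clique_le:
  assumes "finite S" "r \<ge> 1" "r = 2 \<Longrightarrow> 4 \<le> card S"
    and parts: "\<And>P. P \<in> C \<Longrightarrow> partition_on S P \<and> card P = r"
    and clique: "\<And>P Q. P \<in> C \<Longrightarrow> Q \<in> C \<Longrightarrow> P \<noteq> Q \<Longrightarrow> \<exists>x. differ_only_at S x P Q"
  shows "card C \<le> r"
proof (rule ccontr)
  assume "\<not> card C \<le> r"
  then have "finite C" "\<not> card C \<le> Suc 0"
    using \<open>r \<ge> 1\<close> card_ge_0_finite[of C] by simp_all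
  then obtain P Q where "P \<in> C" "Q \<in> C" "P \<noteq> Q"
    using card_le_Suc0_iff_eq by blast
  show False
  proof (cases "\<exists>x\<in>S. \<forall>R\<in>C. agree_off S x P R")
    case True
    then obtain x where "x \<in> S" "\<forall>R\<in>C. agree_off S x P R"
      by blast
    moreover have "partition_on S P" "card P = r"
      using parts[OF \<open>P \<in> C\<close>] by simp_all
    ultimately have "card C \<le> card P"
      using parts by (intro card_sunflower_le[OF \<open>finite S\<close> \<open>x \<in> S\<close>]) auto
    then show False
      using \<open>\<not> card C \<le> r\<close> \<open>card P = r\<close> by simp
  next
    case False
    obtain x y z R where "R \<in> C" and tri: "partition_triangle S x y z P Q R"
      by (rule exists_partition_triangle[OF clique \<open>P \<in> C\<close> \<open>Q \<in> C\<close> \<open>P \<noteq> Q\<close> False])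
    then have "C \<subseteq> {P, Q, R}"
      using triangle_clique_subset[OF \<open>finite S\<close> clique \<open>P \<in> C\<close> \<open>Q \<in> C\<close>] by blast
    then have "card C \<le> card {P, Q, R}"
      using card_mono[of "{P, Q, R}" C] by simp
    also have "\<dots> \<le> 3"
      by (simp add: card_insert_if)
    finally have "card P \<le> 2"
      using \<open>\<not> card C \<le> r\<close> parts[OF \<open>P \<in> C\<close>] by simp
    then show False
      using triangle_small_partition[OF \<open>finite S\<close> tri] assms(3) parts[OF \<open>P \<in> C\<close>] by simp
  qed
qed

section \<open>The Tverberg partition graph\<close>

definition add_to_block :: "'a \<Rightarrow> 'a set \<Rightarrow> 'a set set \<Rightarrow> 'a set set" where
  "add_to_block x B Q = insert (insert x B) (Q - {B})"

lemma partition_on_add_to_block: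
  assumes Q: "partition_on A Q" and "x \<notin> A" "B \<in> Q"
  shows "partition_on (insert x A) (add_to_block x B Q)"
proof -
  have disj: "disjnt (insert x B) (\<Union>(Q - {B}))"
    using partition_onD1[OF Q] partition_onD2[OF Q] \<open>x \<notin> A\<close> \<open>B \<in> Q\<close>
    by (auto simp: disjnt_def disjoint_def)
  then have "disjnt B (\<Union>(Q - {B}))"
    by (simp add: disjnt_def)
  then have "partition_on (A - B) (Q - {B})"
    using Q \<open>B \<in> Q\<close> partition_on_insert[of B "Q - {B}" A] by (simp add: insert_absorb)
  moreover have "insert x A - insert x B = A - B"
    using \<open>x \<notin> A\<close> by auto
  moreover have "B \<subseteq> A" "B \<noteq> {}"
    using partition_onD1[OF Q] partition_onD3[OF Q] \<open>B \<in> Q\<close> by auto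
  ultimately show ?thesis
    unfolding add_to_block_def using partition_on_insert[OF disj] by auto
qed

lemma card_add_to_block:
  assumes "finite Q" "partition_on A Q" "x \<notin> A" "B \<in> Q"
  shows "card (add_to_block x B Q) = card Q"
proof -
  have "insert x B \<notin> Q"
    using assms(2,3) partition_onD1 by blast
  then show ?thesis
    using assms(1,4) card_gt_0_iff[of Q] by (auto simp: add_to_block_def card_Diff_singleton)
qed

lemma restrict_partition_add_to_block:
  assumes Q: "partition_on A Q" and "x \<notin> A" "B \<in> Q"
  shows "restrict_partition (add_to_block x B Q) A = Q"
proof -
  have "C \<inter> A = C" if "C \<in> Q" for C
    using that partition_onD1[OF Q] by auto
  then have "(\<lambda>C. C \<inter> A) ` add_to_block x B Q = Q"
    using \<open>x \<notin> A\<close> \<open>B \<in> Q\<close> by (auto simp: add_to_block_def image_iff)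
  then show ?thesis
    using partition_onD3[OF Q] by (simp add: restrict_partition_def)
qed

lemma inj_on_add_to_block:
  assumes "partition_on A Q" "x \<notin> A"
  shows "inj_on (\<lambda>B. add_to_block x B Q) Q"
proof (rule inj_onI)
  fix B1 B2 assume "B1 \<in> Q" "B2 \<in> Q" "add_to_block x B1 Q = add_to_block x B2 Q"
  moreover have x_notin: "x \<notin> C" if "C \<in> Q" for C
    using that assms partition_onD1 by blast
  ultimately have "insert x B1 = insert x B2"
    by (auto simp: add_to_block_def)
  then show "B1 = B2"
    using x_notin[OF \<open>B1 \<in> Q\<close>] x_notin[OF \<open>B2 \<in> Q\<close>] by (metis insert_ident)
qed

lemma tverberg_partition_add_to_block:
  assumes "tverberg_partition A r Q" "finite A" "x \<notin> A" "B \<in> Q"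
  shows "tverberg_partition (insert x A) r (add_to_block x B Q)"
proof -
  have Q: "partition_on A Q" "card Q = r" and "(\<Inter>C\<in>Q. convex hull C) \<noteq> {}"
    using assms(1) by (auto simp: tverberg_partition_def partition_into_def)
  moreover have "convex hull B \<subseteq> convex hull (insert x B)"
    by (rule hull_mono) auto
  then have "(\<Inter>C\<in>Q. convex hull C) \<subseteq> (\<Inter>C\<in>add_to_block x B Q. convex hull C)"
    using \<open>B \<in> Q\<close> by (auto simp: add_to_block_def)
  ultimately show ?thesis
    using partition_on_add_to_block[OF Q(1) assms(3,4)]
      card_add_to_block[OF finite_elements[OF assms(2) Q(1)] Q(1) assms(3,4)]
    by (auto simp: tverberg_partition_def partition_into_def)
qed

lemma clique_number_eqI:
  assumes "\<And>C. C \<subseteq> V \<Longrightarrow> \<forall>x\<in>C. \<forall>y\<in>C. x \<noteq> y \<longrightarrow> adj x y \<Longrightarrow> card C \<le> k"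
    and "C \<subseteq> V" "\<forall>x\<in>C. \<forall>y\<in>C. x \<noteq> y \<longrightarrow> adj x y" "card C = k"
  shows "clique_number V adj = k"
proof -
  define K where "K = {card C | C. C \<subseteq> V \<and> (\<forall>x\<in>C. \<forall>y\<in>C. x \<noteq> y \<longrightarrow> adj x y)}"
  have "\<forall>n\<in>K. n \<le> k"
    using assms(1) by (auto simp: K_def)
  then have "finite K"
    by (meson finite_atMost finite_subset atMost_iff subsetI)
  moreover have "k \<in> K"
    using assms(2-4) by (auto simp: K_def)
  ultimately show ?thesis
    using \<open>\<forall>n\<in>K. n \<le> k\<close> by (simp add: clique_number_def Max_eqI flip: K_def)
qed

lemma tverberg_adj_iff:
  assumes "finite S" "P \<in> tverberg_vertices S r" "Q \<in> tverberg_vertices S r"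
  shows "tverberg_adj S P Q \<longleftrightarrow> (\<exists>x. differ_only_at S x P Q)"
  using assms partition_distance_eq_1_iff[OF assms(1), of P Q]
  by (auto simp: tverberg_adj_def differ_only_at_def tverberg_vertices_def tverberg_partition_def
      partition_into_def)

lemma card_tverberg_clique_le:
  fixes S :: "(real ^ 'd) set"
  assumes "finite S" "r \<ge> 1" "Tv CARD('d) r < card S" and "C \<subseteq> tverberg_vertices S r"
    and "\<forall>P\<in>C. \<forall>Q\<in>C. P \<noteq> Q \<longrightarrow> tverberg_adj S P Q"
  shows "card C \<le> r"
proof (rule card_partition_clique_le[OF assms(1,2)])
  show "4 \<le> card S" if "r = 2"
  proof -
    have "Tv CARD('d) 2 = CARD('d) + 2" "0 < CARD('d)"
      by (simp_all add: Tv_def)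
    then show ?thesis
      using assms(3) unfolding that by linarith
  qed
  show "partition_on S P \<and> card P = r" if "P \<in> C" for P
    using assms(4) that
    by (auto simp: tverberg_vertices_def tverberg_partition_def partition_into_def)
  show "\<exists>x. differ_only_at S x P Q" if "P \<in> C" "Q \<in> C" "P \<noteq> Q" for P Q
  proof -
    have "tverberg_adj S P Q"
      using assms(5) that by blast
    moreover have "P \<in> tverberg_vertices S r" "Q \<in> tverberg_vertices S r"
      using assms(4) that(1,2) by auto
    ultimately show ?thesis
      using tverberg_adj_iff[OF assms(1)] by simp
  qed
qed

lemma exists_tverberg_clique:
  fixes S :: "(real ^ 'd) set"
  assumes "finite S" "r \<ge> 1" "Tv CARD('d) r < card S"
  shows "\<exists>C\<subseteq>tverberg_vertices S r. (\<forall>P\<in>C. \<forall>Q\<in>C. P \<noteq> Q \<longrightarrow> tverberg_adj S P Q) \<and> card C = r"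
proof -
  obtain x where "x \<in> S"
    using assms(3) by fastforce
  define A where "A = S - {x}"
  have "finite A" "x \<notin> A" and S: "S = insert x A"
    using \<open>finite S\<close> \<open>x \<in> S\<close> by (auto simp: A_def)
  moreover have "Tv CARD('d) r \<le> card A"
    using assms(3) \<open>finite S\<close> \<open>x \<in> S\<close> by (simp add: A_def)
  ultimately obtain Q where TQ: "tverberg_partition A r Q"
    using tverberg[OF _ assms(2)] by blast
  then have Q: "partition_on A Q" "card Q = r"
    by (auto simp: tverberg_partition_def partition_into_def)
  define C where "C = (\<lambda>B. add_to_block x B Q) ` Q"
  have "C \<subseteq> tverberg_vertices S r"
    using tverberg_partition_add_to_block[OF TQ \<open>finite A\<close> \<open>x \<notin> A\<close>] S
    by (auto simp: C_def tverberg_vertices_def)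
  moreover have "card C = r"
    using card_image[OF inj_on_add_to_block[OF Q(1) \<open>x \<notin> A\<close>]] Q(2) by (simp add: C_def)
  moreover have "tverberg_adj S P P'" if "P \<in> C" "P' \<in> C" "P \<noteq> P'" for P P'
  proof -
    have "P \<in> tverberg_vertices S r" "P' \<in> tverberg_vertices S r"
      using that \<open>C \<subseteq> tverberg_vertices S r\<close> by auto
    then have parts: "partition_on S P" "partition_on S P'"
      by (auto simp: tverberg_vertices_def tverberg_partition_def partition_into_def)
    have "restrict_partition P A = Q" "restrict_partition P' A = Q"
      using that restrict_partition_add_to_block[OF Q(1) \<open>x \<notin> A\<close>] by (auto simp: C_def)
    then have "agree_off S x P P'"
      using restrict_partition_remove_eq_iff[OF parts, of x] by (simp add: A_def)
    then show ?thesis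
      using parts \<open>x \<in> S\<close> that(3) partition_distance_eq_1_iff[OF \<open>finite S\<close> parts]
      by (auto simp: tverberg_adj_def)
  qed
  ultimately show ?thesis
    by blast
qed

theorem proposition3p4:
  fixes S :: "(real ^ 'd) set" and r :: nat
  assumes "r \<ge> 1"
    and "finite S"
    and "card S > Tv CARD('d) r"
  shows "clique_number (tverberg_vertices S r) (tverberg_adj S) = r"
proof -
  obtain C where "C \<subseteq> tverberg_vertices S r" "\<forall>P\<in>C. \<forall>Q\<in>C. P \<noteq> Q \<longrightarrow> tverberg_adj S P Q"
    "card C = r"
    using exists_tverberg_clique[OF assms(2,1,3)] by blast
  then show ?thesis
    using clique_number_eqI[where adj = "tverberg_adj S",
        OF card_tverberg_clique_le[OF assms(2,1,3)]]
    by blast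
qed

end
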